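(* Let $T$ be a regular tournament of order $2n+1$, let $S\subseteq V(T)$ with $k=|S|$, and let $x,y$ be two distinct vertices in $V(T)\setminus S$. Then: (i) If $n\geq 3$ and $k\leq \frac{1}{3}(n-1)$, then $T-S$ contains an $(x,y)$-path of length $3$, unless $T$ is isomorphic to a tournament from $\mathcal G$. (ii) If $n\geq 5$, $k\leq \frac{1}{2}n$, and $T-S$ contains no $(x,y)$-path of length $3$, then $T-S$ contains an $(x,y)$-path of length $4$.
   Context: A tournament is regular if every vertex has outdegree equal to indegree. $T-S$ is the subtournament induced by $V(T)\setminus S$. Paths are directed and simple; length = number of arcs. The family $\mathcal G$ consists of the regular tournaments of order $6k+3\geq 9$ whose vertex set is partitioned as $\{x,y,z\}\cup A\cup B\cup C\cup S$ with $|A|=|C|=2k-1$, $|B|=k+2$, $|S|=k$, such that the subtournaments induced by $A$, by $C$ and by $\{z\}\cup B\cup S$ are regular, and (writing $X\to Y$ for "every vertex of $X$ dominates every vertex of $Y$") $A\to B\cup S$, $B\cup S\to C$, $C\to A$, $C\to z$, $z\to A$, $x\to \{y,z\}\cup A\cup S$, $\{x,z\}\cup C\cup S\to y$, $y\to A\cup B$, and $B\cup C\to x$. *)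

theory Defs
  imports Main
begin

text \<open>A tournament on a finite vertex set V with arc relation E
  (E u v means u dominates v). Arcs only between vertices of V.\<close>
definition tournament :: "'a set \<Rightarrow> ('a \<Rightarrow> 'a \<Rightarrow> bool) \<Rightarrow> bool" where
  "tournament V E \<longleftrightarrow> finite V
     \<and> (\<forall>u v. E u v \<longrightarrow> u \<in> V \<and> v \<in> V)
     \<and> (\<forall>v. \<not> E v v)
     \<and> (\<forall>u\<in>V. \<forall>v\<in>V. u \<noteq> v \<longrightarrow> (E u v \<longleftrightarrow> \<not> E v u))"

definition regular_on :: "'a set \<Rightarrow> ('a \<Rightarrow> 'a \<Rightarrow> bool) \<Rightarrow> bool" where
  "regular_on W E \<longleftrightarrow> (\<forall>v\<in>W. card {w\<in>W. E v w} = card {w\<in>W. E w v})"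

definition regular_tournament :: "'a set \<Rightarrow> ('a \<Rightarrow> 'a \<Rightarrow> bool) \<Rightarrow> bool" where
  "regular_tournament V E \<longleftrightarrow> tournament V E \<and> regular_on V E"

definition dominates :: "('a \<Rightarrow> 'a \<Rightarrow> bool) \<Rightarrow> 'a set \<Rightarrow> 'a set \<Rightarrow> bool" where
  "dominates E X Y \<longleftrightarrow> (\<forall>u\<in>X. \<forall>v\<in>Y. E u v)"

definition has_path3 :: "'a set \<Rightarrow> ('a \<Rightarrow> 'a \<Rightarrow> bool) \<Rightarrow> 'a set \<Rightarrow> 'a \<Rightarrow> 'a \<Rightarrow> bool" where
  "has_path3 V E S x y \<longleftrightarrow> (\<exists>a b. distinct [x, a, b, y] \<and> set [x, a, b, y] \<subseteq> V - S
      \<and> E x a \<and> E a b \<and> E b y)"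

definition has_path4 :: "'a set \<Rightarrow> ('a \<Rightarrow> 'a \<Rightarrow> bool) \<Rightarrow> 'a set \<Rightarrow> 'a \<Rightarrow> 'a \<Rightarrow> bool" where
  "has_path4 V E S x y \<longleftrightarrow> (\<exists>a b c. distinct [x, a, b, c, y] \<and> set [x, a, b, c, y] \<subseteq> V - S
      \<and> E x a \<and> E a b \<and> E b c \<and> E c y)"

definition in_family_G :: "'a set \<Rightarrow> ('a \<Rightarrow> 'a \<Rightarrow> bool) \<Rightarrow> bool" where
  "in_family_G V E \<longleftrightarrow> regular_tournament V E \<and>
    (\<exists>(k::nat) x y z A B C S.
       6 * k + 3 \<ge> 9 \<and> card V = 6 * k + 3 \<and>
       V = {x, y, z} \<union> A \<union> B \<union> C \<union> S \<and>
       distinct [x, y, z] \<and> {x, y, z} \<inter> (A \<union> B \<union> C \<union> S) = {} \<and>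
       A \<inter> B = {} \<and> A \<inter> C = {} \<and> A \<inter> S = {} \<and>
       B \<inter> C = {} \<and> B \<inter> S = {} \<and> C \<inter> S = {} \<and>
       card A = 2 * k - 1 \<and> card C = 2 * k - 1 \<and> card B = k + 2 \<and> card S = k \<and>
       regular_on A E \<and> regular_on C E \<and> regular_on ({z} \<union> B \<union> S) E \<and>
       dominates E A (B \<union> S) \<and> dominates E (B \<union> S) C \<and> dominates E C A \<and>
       dominates E C {z} \<and> dominates E {z} A \<and>
       dominates E {x} ({y, z} \<union> A \<union> S) \<and>
       dominates E ({x, z} \<union> C \<union> S) {y} \<and>
       dominates E {y} (A \<union> B) \<and> dominates E (B \<union> C) {x})"

definition tournament_iso :: "'a set \<Rightarrow> ('a \<Rightarrow> 'a \<Rightarrow> bool) \<Rightarrow> 'b set \<Rightarrow> ('b \<Rightarrow> 'b \<Rightarrow> bool) \<Rightarrow> bool" where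
  "tournament_iso V E V' E' \<longleftrightarrow>
     (\<exists>f. bij_betw f V V' \<and> (\<forall>u\<in>V. \<forall>v\<in>V. E u v \<longleftrightarrow> E' (f u) (f v)))"

text \<open>T is isomorphic to a tournament from \<G> (representatives taken on nat,
  which suffices since all members are finite).\<close>
definition iso_to_family_G :: "'a set \<Rightarrow> ('a \<Rightarrow> 'a \<Rightarrow> bool) \<Rightarrow> bool" where
  "iso_to_family_G V E \<longleftrightarrow>
     (\<exists>(V'::nat set) E'. in_family_G V' E' \<and> tournament_iso V E V' E')"

end

theory Submission
  imports Defs
begin

text \<open>
  Let X be the set of out-neighbours of x and Y the set of in-neighbours of y in T - S - {x, y},
  and R the rest of T - S - {x, y}; by regularity |X|, |Y| \<ge> n - |S| - 1. If T - S has no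
  (x,y)-path of length 3, every vertex of Y dominates every other vertex of X, so |X \<inter> Y| \<le> 1
  and every v in X - Y has x, y and all of Y among its n in-neighbours. Choosing v with at least
  (|X - Y| - 1)/2 in-neighbours inside X - Y bounds |X - Y| + 2|Y|; reversing all arcs and
  swapping x and y gives the dual bound on |Y - X| + 2|X|.

  If there is no path of length 4 either, every vertex of R dominates all of X or is dominated by
  all of Y, so R can be added to these bounds, which then contradict |S| \<le> n/2. If
  |S| \<le> (n - 1)/3, the two bounds force n = 3|S| + 1, |X| = |Y| = 2|S| and X \<inter> Y = {z};
  every degree count is then tight, which yields the structure of \<G> with A = X - Y, B = R and
  C = Y - X.
\<close>

lemma tournament_asym:
  assumes "tournament V E" "E u v"
  shows "\<not> E v u"
  using assms unfolding tournament_def by metis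

lemma tournament_finite: "tournament V E \<Longrightarrow> finite V"
  unfolding tournament_def by blast

lemma tournament_irrefl: "tournament V E \<Longrightarrow> \<not> E v v"
  unfolding tournament_def by blast

lemma tournament_arc_in: "tournament V E \<Longrightarrow> E u v \<Longrightarrow> u \<in> V \<and> v \<in> V"
  unfolding tournament_def by blast

lemma tournament_arc_if_not_arc:
  assumes "tournament V E" "u \<in> V" "v \<in> V" "u \<noteq> v" "\<not> E u v"
  shows "E v u"
  using assms unfolding tournament_def by metis

lemma tournament_converse:
  "tournament V E \<Longrightarrow> tournament V (\<lambda>u v. E v u)"
  unfolding tournament_def by metis

lemma regular_on_converse:
  "regular_on W (\<lambda>u v. E v u) \<longleftrightarrow> regular_on W E"
  unfolding regular_on_def by metis

lemma regular_tournament_converse: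
  "regular_tournament V E \<Longrightarrow> regular_tournament V (\<lambda>u v. E v u)"
  unfolding regular_tournament_def using tournament_converse regular_on_converse by metis

lemma tournament_out_degree_plus_in_degree:
  assumes "tournament V E" "W \<subseteq> V" "v \<in> W"
  shows "card {u\<in>W. E v u} + card {u\<in>W. E u v} = card W - 1"
proof -
  have fin: "finite W"
    using assms(1,2) tournament_finite finite_subset by blast
  have "{u\<in>W. E v u} \<union> {u\<in>W. E u v} = W - {v}"
  proof
    show "{u\<in>W. E v u} \<union> {u\<in>W. E u v} \<subseteq> W - {v}"
      using tournament_irrefl[OF assms(1)] by blast
    show "W - {v} \<subseteq> {u\<in>W. E v u} \<union> {u\<in>W. E u v}"
      using assms tournament_arc_if_not_arc[OF assms(1), of v] by auto
  qed
  moreover have "{u\<in>W. E v u} \<inter> {u\<in>W. E u v} = {}"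
    using tournament_asym[OF assms(1)] by blast
  ultimately have "card {u\<in>W. E v u} + card {u\<in>W. E u v} = card (W - {v})"
    using fin by (metis (no_types, lifting) card_Un_disjoint finite_Un finite_Diff)
  then show ?thesis
    using fin assms(3) by simp
qed

lemma tournament_sum_in_degree:
  assumes "tournament V E" "W \<subseteq> V"
  shows "2 * (\<Sum>v\<in>W. card {u\<in>W. E u v}) = card W * (card W - 1)"
proof -
  have fin: "finite W"
    using assms tournament_finite finite_subset by blast
  have card_filter: "card {u\<in>W. P u} = (\<Sum>u\<in>W. of_bool (P u))" for P
    using fin by (simp add: Collect_conj_eq Int_commute)
  \<comment> \<open>both sums count the arcs inside W\<close>
  have "(\<Sum>v\<in>W. card {u\<in>W. E u v}) = (\<Sum>u\<in>W. card {v\<in>W. E u v})"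
    unfolding card_filter by (rule sum.swap)
  then have "2 * (\<Sum>v\<in>W. card {u\<in>W. E u v}) = (\<Sum>v\<in>W. card {u\<in>W. E v u} + card {u\<in>W. E u v})"
    by (simp add: sum.distrib)
  also have "\<dots> = (\<Sum>v\<in>W. card W - 1)"
    using tournament_out_degree_plus_in_degree[OF assms] by simp
  finally show ?thesis
    by simp
qed

lemma tournament_exists_in_degree_ge:
  assumes "tournament V E" "W \<subseteq> V" "W \<noteq> {}"
  shows "\<exists>v\<in>W. card W \<le> 2 * card {u\<in>W. E u v} + 1"
proof (rule ccontr)
  assume contra: "\<not> ?thesis"
  have less: "2 * card {u\<in>W. E u v} + 2 \<le> card W" if "v \<in> W" for v
  proof -
    have "\<not> card W \<le> 2 * card {u\<in>W. E u v} + 1"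
      using contra that by blast
    then show ?thesis
      by linarith
  qed
  obtain w where "w \<in> W"
    using assms(3) by blast
  then have two: "card W \<ge> 2"
    using less by fastforce
  have "card W * (card W - 1) = (\<Sum>v\<in>W. 2 * card {u\<in>W. E u v})"
    using tournament_sum_in_degree[OF assms(1,2)] by (simp add: sum_distrib_left)
  also have "\<dots> \<le> (\<Sum>v\<in>W. card W - 2)"
    using less by (intro sum_mono) (simp add: le_diff_conv2 two)
  also have "\<dots> = card W * (card W - 2)"
    by simp
  finally have "card W - 1 \<le> card W - 2"
    using two by simp
  then show False
    using two by linarith
qed

lemma tournament_in_degree_eq_if_le:
  assumes "tournament V E" "W \<subseteq> V" "card W = 2 * m + 1"
    and le: "\<And>v. v \<in> W \<Longrightarrow> card {u\<in>W. E u v} \<le> m" and "v \<in> W"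
  shows "card {u\<in>W. E u v} = m"
proof (rule ccontr)
  assume "card {u\<in>W. E u v} \<noteq> m"
  with le[OF \<open>v \<in> W\<close>] have "card {u\<in>W. E u v} < m"
    by simp
  moreover have "finite W"
    by (rule card_ge_0_finite) (simp add: assms(3))
  ultimately have "(\<Sum>v\<in>W. card {u\<in>W. E u v}) < (\<Sum>v\<in>W. m)"
    using le \<open>v \<in> W\<close> by (intro sum_strict_mono_ex1) auto
  then have "2 * (\<Sum>v\<in>W. card {u\<in>W. E u v}) < (2 * m + 1) * (2 * m)"
    using assms(3) by simp
  then show False
    using tournament_sum_in_degree[OF assms(1,2)] assms(3) by simp
qed

lemma tournament_regular_on_if_in_degree_le:
  assumes "tournament V E" "W \<subseteq> V" "card W = 2 * m + 1"
    and "\<And>v. v \<in> W \<Longrightarrow> card {u\<in>W. E u v} \<le> m"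
  shows "regular_on W E"
  unfolding regular_on_def
proof
  fix v assume v: "v \<in> W"
  have "card {u\<in>W. E v u} + card {u\<in>W. E u v} = card W - 1"
    by (rule tournament_out_degree_plus_in_degree[OF assms(1,2) v])
  moreover have "card {u\<in>W. E u v} = m"
    by (rule tournament_in_degree_eq_if_le[OF assms v])
  ultimately show "card {u\<in>W. E v u} = card {u\<in>W. E u v}"
    using assms(3) by linarith
qed

lemma tournament_regular_on_if_out_degree_le:
  assumes "tournament V E" "W \<subseteq> V" "card W = 2 * m + 1"
    and "\<And>v. v \<in> W \<Longrightarrow> card {u\<in>W. E v u} \<le> m"
  shows "regular_on W E"
proof -
  have "regular_on W (\<lambda>u v. E v u)"
    by (rule tournament_regular_on_if_in_degree_le[OF tournament_converse[OF assms(1)] assms(2,3)])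
      (use assms(4) in simp)
  then show ?thesis
    using regular_on_converse[of W E] by blast
qed

lemma regular_tournament_out_degree:
  assumes "regular_tournament V E" "card V = 2 * n + 1" "v \<in> V"
  shows "card {u\<in>V. E v u} = n"
  using assms tournament_out_degree_plus_in_degree[of V E V v]
  unfolding regular_tournament_def regular_on_def by force

lemma regular_on_image:
  assumes "inj_on f V" "W \<subseteq> V" and arcs: "\<And>a b. a \<in> V \<Longrightarrow> b \<in> V \<Longrightarrow> E' (f a) (f b) \<longleftrightarrow> E a b"
  shows "regular_on (f ` W) E' \<longleftrightarrow> regular_on W E"
proof -
  have inj: "inj_on f U" if "U \<subseteq> W" for U
    using assms(1,2) that inj_on_subset by blast
  have arcs_W: "E' (f a) (f b) \<longleftrightarrow> E a b" if "a \<in> W" "b \<in> W" for a b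
    using that assms(2) arcs by blast
  have "{w\<in>f ` W. E' (f v) w} = f ` {w\<in>W. E v w}" "{w\<in>f ` W. E' w (f v)} = f ` {w\<in>W. E w v}"
    if "v \<in> W" for v
    using that arcs_W by auto
  then show ?thesis
    unfolding regular_on_def by (simp add: card_image inj)
qed

lemma dominates_image:
  assumes "P \<subseteq> V" "Q \<subseteq> V" and arcs: "\<And>a b. a \<in> V \<Longrightarrow> b \<in> V \<Longrightarrow> E' (f a) (f b) \<longleftrightarrow> E a b"
  shows "dominates E' (f ` P) (f ` Q) \<longleftrightarrow> dominates E P Q"
  using assms unfolding dominates_def by (simp add: subset_iff)

lemma tournament_image:
  assumes "tournament V E" "inj_on f V"
    and arcs: "\<And>a b. a \<in> V \<Longrightarrow> b \<in> V \<Longrightarrow> E' (f a) (f b) \<longleftrightarrow> E a b"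
    and arcs_in: "\<And>u v. E' u v \<Longrightarrow> u \<in> f ` V \<and> v \<in> f ` V"
  shows "tournament (f ` V) E'"
proof -
  have "finite (f ` V)"
    using tournament_finite[OF assms(1)] by blast
  moreover have "\<not> E' w w" for w
    using arcs_in[of w w] arcs tournament_irrefl[OF assms(1)] by blast
  moreover have "E' u v \<longleftrightarrow> \<not> E' v u" if uv: "u \<in> f ` V" "v \<in> f ` V" "u \<noteq> v" for u v
  proof -
    obtain a b where "a \<in> V" "b \<in> V" "u = f a" "v = f b" "a \<noteq> b"
      using uv by blast
    then show ?thesis
      using arcs tournament_asym[OF assms(1)] tournament_arc_if_not_arc[OF assms(1)] by metis
  qed
  ultimately show ?thesis
    unfolding tournament_def using arcs_in by blast
qed

lemma in_family_G_image:
  assumes G: "in_family_G V E" and inj: "inj_on f V"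
    and arcs: "\<And>a b. a \<in> V \<Longrightarrow> b \<in> V \<Longrightarrow> E' (f a) (f b) \<longleftrightarrow> E a b"
    and arcs_in: "\<And>u v. E' u v \<Longrightarrow> u \<in> f ` V \<and> v \<in> f ` V"
  shows "in_family_G (f ` V) E'"
proof -
  obtain k x y z A B C S where
    card: "6 * k + 3 \<ge> 9" "card V = 6 * k + 3"
      "card A = 2 * k - 1" "card C = 2 * k - 1" "card B = k + 2" "card S = k" and
    parts: "V = {x, y, z} \<union> A \<union> B \<union> C \<union> S"
      "distinct [x, y, z]" "{x, y, z} \<inter> (A \<union> B \<union> C \<union> S) = {}"
      "A \<inter> B = {}" "A \<inter> C = {}" "A \<inter> S = {}" "B \<inter> C = {}" "B \<inter> S = {}" "C \<inter> S = {}" and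
    reg: "regular_on A E" "regular_on C E" "regular_on ({z} \<union> B \<union> S) E" and
    dom: "dominates E A (B \<union> S)" "dominates E (B \<union> S) C" "dominates E C A"
      "dominates E C {z}" "dominates E {z} A"
      "dominates E {x} ({y, z} \<union> A \<union> S)" "dominates E ({x, z} \<union> C \<union> S) {y}"
      "dominates E {y} (A \<union> B)" "dominates E (B \<union> C) {x}" and
    RT: "regular_tournament V E"
    using G unfolding in_family_G_def by (elim conjE exE) (rule that; assumption)
  have sub: "{x, y, z} \<subseteq> V" "A \<subseteq> V" "B \<subseteq> V" "C \<subseteq> V" "S \<subseteq> V"
    using parts(1) by auto
  have inj_sub: "inj_on f U" if "U \<subseteq> V" for U
    using inj that inj_on_subset by blast
  have card': "card (f ` U) = card U" if "U \<subseteq> V" for U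
    using card_image inj_sub that by blast
  have disj': "f ` P \<inter> f ` Q = {}" if "P \<union> Q \<subseteq> V" "P \<inter> Q = {}" for P Q
    using inj that inj_on_image_Int[of f V P Q] by auto
  have reg': "regular_on (f ` U) E'" if "U \<subseteq> V" "regular_on U E" for U
    using regular_on_image[of f V U E' E, OF inj that(1) arcs] that(2) by blast
  have dom': "dominates E' (f ` P) (f ` Q)" if "P \<subseteq> V" "Q \<subseteq> V" "dominates E P Q" for P Q
    using dominates_image[of P V Q E' f E, OF that(1,2) arcs] that(3) by blast
  have "tournament (f ` V) E'"
    using tournament_image[of V E f E', OF _ inj arcs arcs_in] RT unfolding regular_tournament_def by blast
  then have "regular_tournament (f ` V) E'"
    using RT reg'[of V] unfolding regular_tournament_def by blast
  moreover have "card (f ` V) = 6 * k + 3" "card (f ` A) = 2 * k - 1" "card (f ` C) = 2 * k - 1"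
    "card (f ` B) = k + 2" "card (f ` S) = k"
    using card card' sub by simp_all
  moreover have "f ` V = {f x, f y, f z} \<union> f ` A \<union> f ` B \<union> f ` C \<union> f ` S"
    using parts(1) by (simp add: image_Un)
  moreover have "distinct [f x, f y, f z]"
    using parts(2) sub(1) inj by (auto simp: inj_on_eq_iff)
  moreover have "{f x, f y, f z} \<inter> (f ` A \<union> f ` B \<union> f ` C \<union> f ` S) = {}"
    "f ` A \<inter> f ` B = {}" "f ` A \<inter> f ` C = {}" "f ` A \<inter> f ` S = {}"
    "f ` B \<inter> f ` C = {}" "f ` B \<inter> f ` S = {}" "f ` C \<inter> f ` S = {}"
    using disj'[of "{x, y, z}" "A \<union> B \<union> C \<union> S"] disj'[of A B] disj'[of A C] disj'[of A S]
      disj'[of B C] disj'[of B S] disj'[of C S] parts sub by (simp_all add: image_Un)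
  moreover have "regular_on (f ` A) E'" "regular_on (f ` C) E'" "regular_on ({f z} \<union> f ` B \<union> f ` S) E'"
    using reg'[OF _ reg(1)] reg'[OF _ reg(2)] reg'[OF _ reg(3)] sub by (simp_all add: image_Un)
  moreover have "dominates E' (f ` A) (f ` B \<union> f ` S)" "dominates E' (f ` B \<union> f ` S) (f ` C)"
    "dominates E' (f ` C) (f ` A)" "dominates E' (f ` C) {f z}" "dominates E' {f z} (f ` A)"
    "dominates E' {f x} ({f y, f z} \<union> f ` A \<union> f ` S)"
    "dominates E' ({f x, f z} \<union> f ` C \<union> f ` S) {f y}"
    "dominates E' {f y} (f ` A \<union> f ` B)" "dominates E' (f ` B \<union> f ` C) {f x}"
    using dom'[OF _ _ dom(1)] dom'[OF _ _ dom(2)] dom'[OF _ _ dom(3)] dom'[OF _ _ dom(4)]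
      dom'[OF _ _ dom(5)] dom'[OF _ _ dom(6)] dom'[OF _ _ dom(7)] dom'[OF _ _ dom(8)]
      dom'[OF _ _ dom(9)] sub by (simp_all add: image_Un)
  ultimately show ?thesis
    unfolding in_family_G_def using card(1) by blast
qed

lemma in_family_G_imp_iso_to_family_G:
  assumes "in_family_G V E"
  shows "iso_to_family_G V E"
proof -
  have "finite V"
    using assms unfolding in_family_G_def regular_tournament_def tournament_def by blast
  then obtain f :: "'a \<Rightarrow> nat" where inj: "inj_on f V"
    using finite_imp_inj_to_nat_seg by blast
  define E' where "E' u v \<longleftrightarrow> (\<exists>a\<in>V. \<exists>b\<in>V. u = f a \<and> v = f b \<and> E a b)" for u v
  have arcs: "E' (f a) (f b) \<longleftrightarrow> E a b" if "a \<in> V" "b \<in> V" for a b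
    using inj that unfolding E'_def by (auto simp: inj_on_eq_iff)
  have "in_family_G (f ` V) E'"
    using in_family_G_image[OF assms inj arcs] unfolding E'_def by blast
  moreover have "tournament_iso V E (f ` V) E'"
    unfolding tournament_iso_def using inj arcs inj_on_imp_bij_betw by blast
  ultimately show ?thesis
    unfolding iso_to_family_G_def by blast
qed

lemma has_path3_converse:
  "has_path3 V (\<lambda>u v. E v u) S y x \<longleftrightarrow> has_path3 V E S x y"
  unfolding has_path3_def by auto

locale terminal_pair =
  fixes V :: "'a set" and E :: "'a \<Rightarrow> 'a \<Rightarrow> bool" and S :: "'a set"
    and x y :: 'a and n :: nat
  assumes regular: "regular_tournament V E"
    and card_V: "card V = 2 * n + 1"
    and S_subset: "S \<subseteq> V"
    and x_in: "x \<in> V - S" and y_in: "y \<in> V - S" and x_ne_y: "x \<noteq> y"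
begin

definition X :: "'a set" where "X = {v \<in> V - S. E x v \<and> v \<noteq> y}"
definition Y :: "'a set" where "Y = {v \<in> V - S. E v y \<and> v \<noteq> x}"
definition R :: "'a set" where "R = V - S - {x, y} - X - Y"

lemma tournament: "tournament V E"
  using regular unfolding regular_tournament_def by blast

lemma finite_V: "finite V"
  using tournament_finite[OF tournament] .

lemma arc_in_V: "E u v \<Longrightarrow> u \<in> V \<and> v \<in> V"
  using tournament_arc_in[OF tournament] .

lemma out_degree: "v \<in> V \<Longrightarrow> card {u\<in>V. E v u} = n"
  using regular_tournament_out_degree[OF regular card_V] .

lemma in_degree: "v \<in> V \<Longrightarrow> card {u\<in>V. E u v} = n"
  using regular_tournament_out_degree[OF regular_tournament_converse[OF regular] card_V] .

lemma converse: "terminal_pair V (\<lambda>u v. E v u) S y x n"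
  using regular_tournament_converse[OF regular] card_V S_subset x_in y_in x_ne_y
  by unfold_locales auto

lemma converse_X: "terminal_pair.X V (\<lambda>u v. E v u) S y x = Y"
  unfolding terminal_pair.X_def[OF converse] Y_def ..

lemma converse_Y: "terminal_pair.Y V (\<lambda>u v. E v u) S y x = X"
  unfolding terminal_pair.Y_def[OF converse] X_def ..

lemma converse_R: "terminal_pair.R V (\<lambda>u v. E v u) S y x = R"
  unfolding terminal_pair.R_def[OF converse] converse_X converse_Y R_def by blast

lemma finite_X: "finite X" and finite_Y: "finite Y" and finite_R: "finite R"
  using finite_V unfolding X_def Y_def R_def by auto

lemma finite_S: "finite S"
  using S_subset finite_V finite_subset by blast

lemma x_notin: "x \<notin> X" "x \<notin> Y" "x \<notin> R"
  and y_notin: "y \<notin> X" "y \<notin> Y" "y \<notin> R"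
  using tournament_irrefl[OF tournament] unfolding X_def Y_def R_def by auto

lemma S_disjoint: "S \<inter> X = {}" "S \<inter> Y = {}" "S \<inter> R = {}"
  unfolding X_def Y_def R_def by auto

lemma R_disjoint: "R \<inter> (X \<union> Y) = {}"
  unfolding R_def by blast

lemma V_split: "V = {x, y} \<union> S \<union> (X \<union> Y) \<union> R"
  using x_in y_in S_subset unfolding X_def Y_def R_def by auto

lemma X_Un_Y_subset: "X \<union> Y \<subseteq> V - S - {x, y}"
  using x_notin y_notin unfolding X_def Y_def by blast

lemma card_V_split: "2 * n + 1 = 2 + card S + card (X \<union> Y) + card R"
proof -
  have card_removed: "card (S \<union> {x, y}) = card S + 2"
    using finite_S x_in y_in x_ne_y by (simp add: card_insert_if)
  have removed_le: "card (S \<union> {x, y}) \<le> 2 * n + 1"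
    using card_mono[OF finite_V, of "S \<union> {x, y}"] S_subset x_in y_in card_V by simp
  have "V - S - {x, y} = V - (S \<union> {x, y})"
    by blast
  then have inner: "card (V - S - {x, y}) = 2 * n + 1 - (card S + 2)"
    using card_Diff_subset[of "S \<union> {x, y}" V] finite_S S_subset x_in y_in card_V card_removed
    by simp
  have "R = (V - S - {x, y}) - (X \<union> Y)"
    unfolding R_def by blast
  then have "card R = card (V - S - {x, y}) - card (X \<union> Y)"
    using card_Diff_subset[OF _ X_Un_Y_subset] finite_X finite_Y by simp
  moreover have "card (X \<union> Y) \<le> card (V - S - {x, y})"
    using card_mono[OF _ X_Un_Y_subset] finite_V by simp
  ultimately show ?thesis
    using inner removed_le card_removed by linarith
qed

lemma card_X_minus_Y_add_Int: "card (X - Y) + card (X \<inter> Y) = card X"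
  using card_Diff_subset_Int[of X Y] card_mono[OF finite_X, of "X \<inter> Y"] finite_X by simp

lemma card_Y_minus_X_add_Int: "card (Y - X) + card (X \<inter> Y) = card Y"
  using card_Diff_subset_Int[of Y X] card_mono[OF finite_Y, of "Y \<inter> X"] finite_Y
  by (simp add: Int_commute)

lemma out_nbrs_x_subset: "{u\<in>V. E x u} \<subseteq> X \<union> S \<union> {y}"
  unfolding X_def by auto

lemma card_X_Un_S_Un_y: "card (X \<union> S \<union> {y}) = card X + card S + 1"
proof -
  have "card (X \<union> S) = card X + card S"
    using finite_X finite_S S_disjoint(1) by (intro card_Un_disjoint) auto
  moreover have "y \<notin> X \<union> S"
    using y_in y_notin by blast
  ultimately show ?thesis
    using finite_X finite_S by simp
qed

lemma card_X_lower: "n \<le> card X + card S + 1"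
proof -
  have "n = card {u\<in>V. E x u}"
    using out_degree x_in by simp
  also have "\<dots> \<le> card (X \<union> S \<union> {y})"
    using finite_X finite_S out_nbrs_x_subset by (intro card_mono) auto
  finally show ?thesis
    using card_X_Un_S_Un_y by simp
qed

lemma card_Y_lower: "n \<le> card Y + card S + 1"
  using terminal_pair.card_X_lower[OF converse] unfolding converse_X .

lemma out_degree_inside_bound:
  assumes "w \<in> V" "D \<inter> W = {}" "\<forall>d\<in>D. E w d"
  shows "card {u\<in>W. E w u} + card D \<le> n"
proof -
  have sub: "{u\<in>W. E w u} \<union> D \<subseteq> {u\<in>V. E w u}"
  proof
    fix u assume "u \<in> {u\<in>W. E w u} \<union> D"
    then have "E w u"
      using assms(3) by blast
    then show "u \<in> {u\<in>V. E w u}"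
      using arc_in_V by blast
  qed
  have "finite ({u\<in>W. E w u} \<union> D)"
    by (rule finite_subset[OF sub]) (simp add: finite_V)
  moreover have "{u\<in>W. E w u} \<inter> D = {}"
    using assms(2) by blast
  ultimately have "card {u\<in>W. E w u} + card D = card ({u\<in>W. E w u} \<union> D)"
    by (simp add: card_Un_disjoint)
  also have "\<dots> \<le> card {u\<in>V. E w u}"
    using card_mono[OF _ sub] finite_V by simp
  finally show ?thesis
    using out_degree[OF assms(1)] by simp
qed

lemma R_dominates_x: "r \<in> R \<Longrightarrow> E r x"
  using tournament_arc_if_not_arc[OF tournament, of x r] x_in unfolding R_def X_def by auto

lemma y_dominates_R: "r \<in> R \<Longrightarrow> E y r"
  using terminal_pair.R_dominates_x[OF converse] unfolding converse_R .

lemma y_dominates_X_minus_Y: "v \<in> X - Y \<Longrightarrow> E y v"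
  using tournament_arc_if_not_arc[OF tournament, of v y] tournament_irrefl[OF tournament] y_in
  unfolding X_def Y_def by auto

lemma Y_minus_X_dominates_x: "w \<in> Y - X \<Longrightarrow> E w x"
  using terminal_pair.y_dominates_X_minus_Y[OF converse] unfolding converse_X converse_Y .

lemma card_forced_in_nbrs:
  assumes "Q \<subseteq> R"
  shows "card ({x, y} \<union> Y \<union> Q \<union> {u\<in>X - Y. E u v}) = 2 + card Y + card Q + card {u\<in>X - Y. E u v}"
proof -
  have fin: "finite Q" "finite {u\<in>X - Y. E u v}"
    using assms finite_R finite_X finite_subset by auto
  have "card ({x, y} \<union> Y) = 2 + card Y"
    using x_notin y_notin x_ne_y finite_Y by (simp add: card_insert_if)
  moreover have "card ({x, y} \<union> Y \<union> Q) = card ({x, y} \<union> Y) + card Q"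
    using assms x_notin y_notin R_disjoint fin finite_Y by (intro card_Un_disjoint) auto
  moreover have "card ({x, y} \<union> Y \<union> Q \<union> {u\<in>X - Y. E u v})
      = card ({x, y} \<union> Y \<union> Q) + card {u\<in>X - Y. E u v}"
    using assms x_notin y_notin R_disjoint fin finite_Y by (intro card_Un_disjoint) auto
  ultimately show ?thesis
    by simp
qed

lemma R_split_if_no_path4:
  assumes "\<not> has_path4 V E S x y"
  shows "R \<subseteq> {q\<in>R. \<forall>p\<in>X. E q p} \<union> {q\<in>R. \<forall>r\<in>Y. E r q}"
proof
  fix q assume q: "q \<in> R"
  show "q \<in> {q\<in>R. \<forall>p\<in>X. E q p} \<union> {q\<in>R. \<forall>r\<in>Y. E r q}"
  proof (cases "\<forall>p\<in>X. E q p")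
    case False
    then obtain p where p: "p \<in> X" "\<not> E q p"
      by blast
    have "p \<in> V" "q \<in> V" "p \<noteq> q"
      using p(1) q unfolding R_def X_def by auto
    then have "E p q"
      using p(2) tournament_arc_if_not_arc[OF tournament] by blast
    have "E r q" if r: "r \<in> Y" for r
    proof (rule tournament_arc_if_not_arc[OF tournament])
      show "r \<in> V" "q \<in> V" "q \<noteq> r"
        using q r unfolding R_def Y_def by auto
      show "\<not> E q r"
      proof
        assume "E q r"
        then have "p \<noteq> r"
          using \<open>E p q\<close> tournament_asym[OF tournament] by blast
        then have "distinct [x, p, q, r, y]" "set [x, p, q, r, y] \<subseteq> V - S"
          using p(1) q r x_in y_in x_ne_y x_notin y_notin \<open>p \<noteq> q\<close> \<open>q \<noteq> r\<close>
          unfolding R_def X_def Y_def by auto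
        moreover have "E x p" "E r y"
          using p(1) r unfolding X_def Y_def by auto
        ultimately have "has_path4 V E S x y"
          using \<open>E p q\<close> \<open>E q r\<close> unfolding has_path4_def by blast
        then show False
          using assms by blast
      qed
    qed
    then show ?thesis
      using q by blast
  qed (use q in blast)
qed

end

locale no_path3 = terminal_pair +
  assumes no_path3: "\<not> has_path3 V E S x y"
begin

lemma converse: "no_path3 V (\<lambda>u v. E v u) S y x n"
proof (intro no_path3.intro no_path3_axioms.intro)
  show "terminal_pair V (\<lambda>u v. E v u) S y x n"
    by (rule terminal_pair.converse[OF terminal_pair_axioms])
  show "\<not> has_path3 V (\<lambda>u v. E v u) S y x"
    using no_path3 has_path3_converse[of V E S] by blast
qed

lemma Y_dominates_X:
  assumes "p \<in> X" "q \<in> Y" "p \<noteq> q"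
  shows "E q p"
proof (rule tournament_arc_if_not_arc[OF tournament])
  show "p \<in> V" "q \<in> V" "p \<noteq> q"
    using assms unfolding X_def Y_def by auto
  show "\<not> E p q"
  proof
    assume "E p q"
    have "distinct [x, p, q, y]" "set [x, p, q, y] \<subseteq> V - S"
      using assms x_in y_in x_ne_y x_notin y_notin unfolding X_def Y_def by auto
    moreover have "E x p" "E q y"
      using assms unfolding X_def Y_def by auto
    ultimately show False
      using no_path3 \<open>E p q\<close> unfolding has_path3_def by blast
  qed
qed

lemma card_X_Int_Y: "card (X \<inter> Y) \<le> 1"
proof -
  have "p = q" if "p \<in> X \<inter> Y" "q \<in> X \<inter> Y" for p q
    using that Y_dominates_X tournament_asym[OF tournament] by blast
  then show ?thesis
    using finite_X by (simp add: card_le_Suc0_iff_eq)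
qed

lemma forced_in_nbrs_subset:
  assumes "v \<in> X - Y" "\<forall>q\<in>Q. E q v"
  shows "{x, y} \<union> Y \<union> Q \<union> {u\<in>X - Y. E u v} \<subseteq> {u\<in>V. E u v}"
proof -
  have "E x v" "E y v"
    using assms(1) y_dominates_X_minus_Y unfolding X_def by auto
  then show ?thesis
    using assms Y_dominates_X arc_in_V by blast
qed

lemma in_degree_X_minus_Y_bound:
  assumes "v \<in> X - Y" "Q \<subseteq> R" "\<forall>q\<in>Q. E q v"
  shows "2 + card Y + card Q + card {u\<in>X - Y. E u v} \<le> n"
proof -
  have "2 + card Y + card Q + card {u\<in>X - Y. E u v} = card ({x, y} \<union> Y \<union> Q \<union> {u\<in>X - Y. E u v})"
    using card_forced_in_nbrs[OF assms(2)] by simp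
  also have "\<dots> \<le> card {u\<in>V. E u v}"
    using finite_V forced_in_nbrs_subset[OF assms(1,3)] by (intro card_mono) auto
  also have "\<dots> = n"
    using assms(1) in_degree unfolding X_def by blast
  finally show ?thesis .
qed

lemma card_X_minus_Y_bound:
  assumes "X - Y \<noteq> {}" "Q \<subseteq> R" "\<forall>q\<in>Q. \<forall>v\<in>X - Y. E q v"
  shows "card (X - Y) + 2 * card Y + 2 * card Q + 3 \<le> 2 * n"
proof -
  obtain v where "v \<in> X - Y" "card (X - Y) \<le> 2 * card {u\<in>X - Y. E u v} + 1"
    using tournament_exists_in_degree_ge[OF tournament _ assms(1)] unfolding X_def by blast
  then show ?thesis
    using in_degree_X_minus_Y_bound[of v Q] assms(2,3) by simp
qed

lemma card_Y_minus_X_bound: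
  assumes "Y - X \<noteq> {}" "Q \<subseteq> R" "\<forall>q\<in>Q. \<forall>w\<in>Y - X. E w q"
  shows "card (Y - X) + 2 * card X + 2 * card Q + 3 \<le> 2 * n"
  using no_path3.card_X_minus_Y_bound[OF converse] assms unfolding converse_X converse_Y converse_R by blast

lemma has_path4:
  assumes "5 \<le> n" "2 * card S \<le> n"
  shows "has_path4 V E S x y"
proof (rule ccontr)
  assume no_path4: "\<not> has_path4 V E S x y"
  define R1 where "R1 = {q\<in>R. \<forall>p\<in>X. E q p}"
  define R2 where "R2 = {q\<in>R. \<forall>r\<in>Y. E r q}"
  have "card R \<le> card (R1 \<union> R2)"
    using R_split_if_no_path4[OF no_path4] finite_R unfolding R1_def R2_def by (intro card_mono) auto
  then have R: "card R \<le> card R1 + card R2"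
    using card_Un_le[of R1 R2] by linarith
  have "0 < card (X - Y)" "0 < card (Y - X)"
    using card_X_lower card_Y_lower card_X_minus_Y_add_Int card_Y_minus_X_add_Int card_X_Int_Y assms by linarith+
  then have "X - Y \<noteq> {}" "Y - X \<noteq> {}"
    using card_gt_0_iff by blast+
  then have "card (X - Y) + 2 * card Y + 2 * card R1 + 3 \<le> 2 * n"
    "card (Y - X) + 2 * card X + 2 * card R2 + 3 \<le> 2 * n"
    by (intro card_X_minus_Y_bound card_Y_minus_X_bound; auto simp: R1_def R2_def)+
  moreover have "card (X \<union> Y) + card (X \<inter> Y) = card X + card Y"
    using card_Un_Int[OF finite_X finite_Y] by simp
  \<comment> \<open>adding the two bounds gives |X| + |Y| + 4 \<le> 2|S|\<close>
  ultimately show False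
    using R card_V_split card_X_lower card_Y_lower card_X_Int_Y card_X_minus_Y_add_Int card_Y_minus_X_add_Int assms
    by linarith
qed

lemma counts_if_small:
  assumes "3 \<le> n" "3 * card S \<le> n - 1"
  shows "n = 3 * card S + 1" "card X = 2 * card S" "card Y = 2 * card S" "card (X \<inter> Y) = 1"
proof -
  have k: "3 * card S + 1 \<le> n"
    using assms by linarith
  have "0 < card (X - Y)" "0 < card (Y - X)"
    using card_X_lower card_Y_lower card_X_minus_Y_add_Int card_Y_minus_X_add_Int card_X_Int_Y k
      assms(1) by linarith+
  then have "X - Y \<noteq> {}" "Y - X \<noteq> {}"
    using card_gt_0_iff by blast+
  then have "card (X - Y) + 2 * card Y + 3 \<le> 2 * n" "card (Y - X) + 2 * card X + 3 \<le> 2 * n"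
    using card_X_minus_Y_bound[of "{}"] card_Y_minus_X_bound[of "{}"] by simp_all
  \<comment> \<open>together with |X|, |Y| \<ge> n - |S| - 1 they give n \<le> 3|S| + |X \<inter> Y|, so all are tight\<close>
  then show "n = 3 * card S + 1" "card X = 2 * card S" "card Y = 2 * card S" "card (X \<inter> Y) = 1"
    using card_X_lower card_Y_lower card_X_minus_Y_add_Int card_Y_minus_X_add_Int card_X_Int_Y k by linarith+
qed

end

locale no_path3_extremal = no_path3 +
  assumes n_eq: "n = 3 * card S + 1"
    and card_X_eq: "card X = 2 * card S" and card_Y_eq: "card Y = 2 * card S"
    and card_X_Int_Y_eq: "card (X \<inter> Y) = 1"
begin

lemma converse: "no_path3_extremal V (\<lambda>u v. E v u) S y x n"
proof (intro no_path3_extremal.intro no_path3_extremal_axioms.intro)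
  show "no_path3 V (\<lambda>u v. E v u) S y x n"
    by (rule no_path3.converse[OF no_path3_axioms])
qed (simp_all add: converse_X converse_Y Int_commute n_eq card_X_eq card_Y_eq card_X_Int_Y_eq)

lemma card_S_pos: "1 \<le> card S"
  using card_mono[OF finite_X, of "X \<inter> Y"] card_X_eq card_X_Int_Y_eq by simp

lemma card_X_minus_Y_eq: "card (X - Y) = 2 * (card S - 1) + 1"
  using card_X_minus_Y_add_Int card_X_eq card_X_Int_Y_eq card_S_pos by linarith

lemma card_R_eq: "card R = card S + 2"
  using card_V_split card_Un_Int[OF finite_X finite_Y] n_eq card_X_eq card_Y_eq card_X_Int_Y_eq
  by linarith

lemma in_degree_X_minus_Y:
  assumes "v \<in> X - Y"
  shows "card {u\<in>X - Y. E u v} = card S - 1"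
proof (rule tournament_in_degree_eq_if_le[OF tournament _ card_X_minus_Y_eq _ assms])
  show "X - Y \<subseteq> V"
    unfolding X_def by blast
  show "card {u\<in>X - Y. E u w} \<le> card S - 1" if "w \<in> X - Y" for w
    using in_degree_X_minus_Y_bound[OF that, of "{}"] card_Y_eq n_eq by simp
qed

lemma regular_X_minus_Y: "regular_on (X - Y) E"
proof (rule tournament_regular_on_if_in_degree_le[OF tournament _ card_X_minus_Y_eq])
  show "X - Y \<subseteq> V"
    unfolding X_def by blast
  show "card {u\<in>X - Y. E u v} \<le> card S - 1" if "v \<in> X - Y" for v
    using in_degree_X_minus_Y[OF that] by simp
qed

lemma in_nbrs_X_minus_Y:
  assumes "v \<in> X - Y"
  shows "{u\<in>V. E u v} = {x, y} \<union> Y \<union> {u\<in>X - Y. E u v}"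
proof -
  have "card ({x, y} \<union> Y \<union> {u\<in>X - Y. E u v}) = n"
    using card_forced_in_nbrs[of "{}" v] in_degree_X_minus_Y[OF assms] card_Y_eq n_eq card_S_pos
    by simp
  moreover have "n = card {u\<in>V. E u v}"
    using assms in_degree unfolding X_def by simp
  ultimately show ?thesis
    using forced_in_nbrs_subset[OF assms, of "{}"] finite_V by (intro card_subset_eq[symmetric]) auto
qed

lemma X_minus_Y_dominates:
  assumes "v \<in> X - Y" "u \<in> R \<union> S"
  shows "E v u"
proof (rule tournament_arc_if_not_arc[OF tournament])
  have "u \<notin> X" "u \<notin> Y" "u \<noteq> x" "u \<noteq> y"
    using assms(2) S_disjoint R_disjoint x_in y_in x_notin y_notin by auto
  then show "u \<noteq> v"
    using assms(1) by blast
  show "u \<in> V" "v \<in> V"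
    using assms S_subset unfolding X_def R_def by auto
  show "\<not> E u v"
    using in_nbrs_X_minus_Y[OF assms(1)] \<open>u \<in> V\<close> \<open>u \<notin> Y\<close> \<open>u \<noteq> x\<close> \<open>u \<noteq> y\<close> \<open>u \<notin> X\<close>
    by blast
qed

lemma regular_Y_minus_X: "regular_on (Y - X) E"
  using no_path3_extremal.regular_X_minus_Y[OF converse] regular_on_converse[of "Y - X" E]
  unfolding converse_X converse_Y by blast

lemma dominates_Y_minus_X:
  assumes "w \<in> Y - X" "u \<in> R \<union> S"
  shows "E u w"
  using no_path3_extremal.X_minus_Y_dominates[OF converse] assms unfolding converse_X converse_Y converse_R .

lemma out_nbrs_x: "{u\<in>V. E x u} = X \<union> S \<union> {y}"
proof (rule card_subset_eq[OF _ out_nbrs_x_subset])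
  show "finite (X \<union> S \<union> {y})"
    using finite_X finite_S by simp
  show "card {u\<in>V. E x u} = card (X \<union> S \<union> {y})"
    using out_degree x_in card_X_Un_S_Un_y card_X_eq n_eq by simp
qed

lemma x_dominates_y: "E x y"
  using out_nbrs_x by blast

lemma x_dominates_S: "s \<in> S \<Longrightarrow> E x s"
  using out_nbrs_x by blast

lemma S_dominates_y: "s \<in> S \<Longrightarrow> E s y"
  using no_path3_extremal.x_dominates_S[OF converse] .

definition z :: 'a where "z = the_elem (X \<inter> Y)"

lemma X_Int_Y_eq: "X \<inter> Y = {z}"
  using card_X_Int_Y_eq unfolding z_def by (metis card_1_singletonE the_elem_eq)

lemma z_in: "z \<in> X" "z \<in> Y"
  using X_Int_Y_eq by auto

lemma card_Y_minus_X_eq: "card (Y - X) = 2 * card S - 1"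
  using card_Y_minus_X_add_Int card_Y_eq card_X_Int_Y_eq by linarith

lemma z_R_S_subset: "{z} \<union> R \<union> S \<subseteq> V"
  using z_in S_subset unfolding X_def R_def by auto

lemma card_z_R_S: "card ({z} \<union> R \<union> S) = 2 * (card S + 1) + 1"
proof -
  have "z \<notin> R \<union> S"
    using z_in S_disjoint R_disjoint by blast
  moreover have "card (R \<union> S) = card R + card S"
    using finite_R finite_S S_disjoint(3) by (intro card_Un_disjoint) auto
  ultimately show ?thesis
    using card_R_eq finite_R finite_S by simp
qed

lemma out_degree_z_R_S:
  assumes w: "w \<in> {z} \<union> R \<union> S"
  shows "card {u\<in>{z} \<union> R \<union> S. E w u} \<le> card S + 1"
proof -
  \<comment> \<open>w dominates 2|S| vertices outside {z} \<union> R \<union> S, leaving at most n - 2|S| inside\<close>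
  have bound: "card {u\<in>{z} \<union> R \<union> S. E w u} \<le> card S + 1"
    if "D \<inter> ({z} \<union> R \<union> S) = {}" "\<forall>d\<in>D. E w d" "card D = 2 * card S" for D
    using out_degree_inside_bound[OF _ that(1,2)] that(3) w z_R_S_subset n_eq by auto
  have card_D: "card (insert y (X - Y)) = 2 * card S" "card (insert x (Y - X)) = 2 * card S"
    "card (insert y (Y - X)) = 2 * card S"
    using card_insert_disjoint[of "X - Y" y] card_insert_disjoint[of "Y - X" x]
      card_insert_disjoint[of "Y - X" y] finite_X finite_Y x_notin y_notin
      card_X_minus_Y_eq card_Y_minus_X_eq card_S_pos by simp_all
  consider "w = z" | "w \<in> R" | "w \<in> S"
    using w by blast
  then show ?thesis
  proof cases
    case 1
    have "E z y"
      using z_in(2) unfolding Y_def by blast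
    moreover have "\<forall>d\<in>X - Y. E z d"
      using z_in(2) Y_dominates_X by blast
    moreover have "insert y (X - Y) \<inter> ({z} \<union> R \<union> S) = {}"
      using z_in y_in y_notin S_disjoint R_disjoint by auto
    ultimately show ?thesis
      using bound[OF _ _ card_D(1)] 1 by blast
  next
    case 2
    have "E w x" "\<forall>d\<in>Y - X. E w d"
      using 2 R_dominates_x dominates_Y_minus_X by blast+
    moreover have "insert x (Y - X) \<inter> ({z} \<union> R \<union> S) = {}"
      using z_in x_in x_notin S_disjoint R_disjoint by auto
    ultimately show ?thesis
      using bound[OF _ _ card_D(2)] by blast
  next
    case 3
    have "E w y" "\<forall>d\<in>Y - X. E w d"
      using 3 S_dominates_y dominates_Y_minus_X by blast+
    moreover have "insert y (Y - X) \<inter> ({z} \<union> R \<union> S) = {}"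
      using z_in y_in y_notin S_disjoint R_disjoint by auto
    ultimately show ?thesis
      using bound[OF _ _ card_D(3)] by blast
  qed
qed

lemma regular_z_R_S: "regular_on ({z} \<union> R \<union> S) E"
  using tournament_regular_on_if_out_degree_le[OF tournament z_R_S_subset card_z_R_S]
    out_degree_z_R_S by blast

lemma in_family_G: "in_family_G V E"
proof -
  have x_to_X: "E x v" if "v \<in> X" for v
    using that unfolding X_def by blast
  have Y_to_y: "E w y" if "w \<in> Y" for w
    using that unfolding Y_def by blast
  have "9 \<le> 6 * card S + 3" "card V = 6 * card S + 3"
    using card_S_pos card_V n_eq by simp_all
  moreover have "V = {x, y, z} \<union> (X - Y) \<union> R \<union> (Y - X) \<union> S"
    using V_split X_Int_Y_eq by auto
  moreover have "distinct [x, y, z]" "{x, y, z} \<inter> ((X - Y) \<union> R \<union> (Y - X) \<union> S) = {}"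
    using x_ne_y z_in x_in y_in x_notin y_notin S_disjoint R_disjoint by auto
  moreover have "(X - Y) \<inter> R = {}" "(X - Y) \<inter> (Y - X) = {}" "(X - Y) \<inter> S = {}"
    "R \<inter> (Y - X) = {}" "R \<inter> S = {}" "(Y - X) \<inter> S = {}"
    using S_disjoint R_disjoint by auto
  moreover have "card (X - Y) = 2 * card S - 1" "card (Y - X) = 2 * card S - 1"
    "card R = card S + 2"
    using card_X_minus_Y_eq card_Y_minus_X_eq card_R_eq card_S_pos by simp_all
  moreover have "dominates E (X - Y) (R \<union> S)" "dominates E (R \<union> S) (Y - X)"
    "dominates E (Y - X) (X - Y)" "dominates E (Y - X) {z}" "dominates E {z} (X - Y)"
    unfolding dominates_def using X_minus_Y_dominates dominates_Y_minus_X Y_dominates_X z_in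
    by blast+
  moreover have "dominates E {x} ({y, z} \<union> (X - Y) \<union> S)"
    "dominates E ({x, z} \<union> (Y - X) \<union> S) {y}"
    "dominates E {y} ((X - Y) \<union> R)" "dominates E (R \<union> (Y - X)) {x}"
    unfolding dominates_def
    using x_dominates_y x_dominates_S S_dominates_y y_dominates_X_minus_Y y_dominates_R
      R_dominates_x Y_minus_X_dominates_x z_in x_to_X Y_to_y by auto
  ultimately show ?thesis
    unfolding in_family_G_def using regular regular_X_minus_Y regular_Y_minus_X regular_z_R_S
    by blast
qed

end

theorem lemma3p2:
  fixes V :: "'a set" and E :: "'a \<Rightarrow> 'a \<Rightarrow> bool" and S :: "'a set"
    and x y :: 'a and n :: nat
  assumes "regular_tournament V E"
    and "card V = 2 * n + 1"
    and "S \<subseteq> V"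
    and "x \<in> V - S" and "y \<in> V - S" and "x \<noteq> y"
  shows "(n \<ge> 3 \<and> 3 * card S \<le> n - 1 \<longrightarrow>
            has_path3 V E S x y \<or> iso_to_family_G V E)
       \<and> (n \<ge> 5 \<and> 2 * card S \<le> n \<and> \<not> has_path3 V E S x y \<longrightarrow>
            has_path4 V E S x y)"
proof -
  have setting: "terminal_pair V E S x y n"
    using assms by unfold_locales
  have no_path3: "no_path3 V E S x y n" if "\<not> has_path3 V E S x y"
    using setting that by (intro no_path3.intro no_path3_axioms.intro)
  show ?thesis
  proof (intro conjI impI)
    assume small: "n \<ge> 3 \<and> 3 * card S \<le> n - 1"
    show "has_path3 V E S x y \<or> iso_to_family_G V E"
    proof (cases "has_path3 V E S x y")
      case False
      then have np: "no_path3 V E S x y n"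
        by (rule no_path3)
      then have "no_path3_extremal V E S x y n"
        using no_path3.counts_if_small[OF np] small by (intro no_path3_extremal.intro no_path3_extremal_axioms.intro) simp_all
      then show ?thesis
        by (intro disjI2 in_family_G_imp_iso_to_family_G no_path3_extremal.in_family_G)
    qed simp
  next
    assume large: "n \<ge> 5 \<and> 2 * card S \<le> n \<and> \<not> has_path3 V E S x y"
    then have "no_path3 V E S x y n"
      using no_path3 by blast
    then show "has_path4 V E S x y"
      using large by (intro no_path3.has_path4) auto
  qed
qed

end
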